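(* Let $d>1$ be a square-free positive integer and let $M=\mathbb{Q}(i\sqrt{d})$, where $i=\sqrt{-1}$. Let $n\geq 1$, let $\alpha_1,\ldots,\alpha_n$ be distinct non-zero real numbers, and let $\lambda_j=\lambda_{j1}+i\lambda_{j2}$ with $\lambda_{j1},\lambda_{j2}\in\mathbb{R}$ for $1\leq j\leq n$. Let $c_0>0$. Let $X,Y\in\mathbb{Z}_M$ satisfy \[ \left|\prod_{j=1}^n(X-\alpha_j Y+\lambda_j)\right|\leq c_0 . \] (a) If $d\equiv 3 \pmod 4$, write $X=x_1+x_2\frac{1+i\sqrt{d}}{2}$, $Y=y_1+y_2\frac{1+i\sqrt{d}}{2}$ with $x_1,x_2,y_1,y_2\in\mathbb{Z}$. Then \[ \left|\prod_{j=1}^n\bigl((2x_1+x_2)-\alpha_j (2y_1+y_2)+2\lambda_{j1}\bigr)\right|\leq 2^n c_0 \quad\text{and}\quad \left|\prod_{j=1}^n\Bigl(x_2-\alpha_j y_2+\frac{2}{\sqrt{d}}\lambda_{j2}\Bigr)\right|\leq \frac{2^n c_0}{\sqrt{d}^{\,n}}. \] (b) If $d\equiv 1,2 \pmod 4$, write $X=x_1+x_2 i\sqrt{d}$, $Y=y_1+y_2 i\sqrt{d}$ with $x_1,x_2,y_1,y_2\in\mathbb{Z}$. Then \[ \left|\prod_{j=1}^n(x_1-\alpha_j y_1+\lambda_{j1})\right|\leq c_0 \quad\text{and}\quad \left|\prod_{j=1}^n\Bigl(x_2-\alpha_j y_2+\frac{1}{\sqrt{d}}\lambda_{j2}\Bigr)\right|\leq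 \frac{c_0}{\sqrt{d}^{\,n}}. \]
   Context: $\mathbb{Z}_M$ denotes the ring of integers of the number field $M$, viewed as a subset of $\mathbb{C}$ via $i\sqrt{d}\in\mathbb{C}$. For $d\equiv 3\pmod 4$ an integral basis of $\mathbb{Z}_M$ is $\{1,\frac{1+i\sqrt{d}}{2}\}$, and for $d\equiv 1,2\pmod 4$ it is $\{1,i\sqrt{d}\}$, so the integers $x_1,x_2,y_1,y_2$ are uniquely determined. *)

theory Defs
  imports Complex_Main "HOL-Computational_Algebra.Squarefree"
begin

text \<open>The second element of the integral basis of the ring of integers of
  M = Q(i sqrt d), for square-free d > 1, embedded in C via i sqrt d.\<close>
definition omegaM :: "nat \<Rightarrow> complex" where
  "omegaM d = (if d mod 4 = 3
               then (1 + \<i> * complex_of_real (sqrt (real d))) / 2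
               else \<i> * complex_of_real (sqrt (real d)))"

definition ZM :: "nat \<Rightarrow> complex set" where
  "ZM d = {of_int a + of_int b * omegaM d | a b :: int. True}"

end

theory Submission
  imports Defs
begin

text \<open>Since X and Y have integer coordinates in the basis {1, omegaM d}, each factor of the
  claimed products is a fixed real multiple (2 and 2/sqrt d, resp. 1 and 1/sqrt d) of the real
  or imaginary part of the complex factor X - alpha_j Y + lambda_j. Both parts are bounded in
  absolute value by the modulus, and the bound multiplies over j.\<close>

lemma abs_prod_scaled_le_norm_prod:
  fixes z :: "'i \<Rightarrow> 'a::real_normed_field" and g :: "'a \<Rightarrow> real"
  assumes g_le_norm: "\<And>w. \<bar>g w\<bar> \<le> norm w"
    and "norm (\<Prod>j\<in>A. z j) \<le> B" and "c \<ge> 0"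
  shows "\<bar>\<Prod>j\<in>A. c * g (z j)\<bar> \<le> c ^ card A * B"
proof -
  have "\<bar>\<Prod>j\<in>A. c * g (z j)\<bar> = (\<Prod>j\<in>A. c * \<bar>g (z j)\<bar>)"
    using \<open>c \<ge> 0\<close> by (simp add: abs_prod abs_mult)
  also have "\<dots> \<le> (\<Prod>j\<in>A. c * norm (z j))"
    using \<open>c \<ge> 0\<close> g_le_norm by (intro prod_mono) (auto intro: mult_left_mono)
  also have "\<dots> = c ^ card A * norm (\<Prod>j\<in>A. z j)"
    by (simp add: prod.distrib prod_norm)
  also have "\<dots> \<le> c ^ card A * B"
    using assms by (simp add: mult_left_mono)
  finally show ?thesis .
qed

lemma Re_Im_linear_form_in_basis:
  assumes "X = of_int x1 + of_int x2 * w" and "Y = of_int y1 + of_int y2 * w"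
  shows "Re (X - of_real a * Y + l)
      = (real_of_int x1 - a * real_of_int y1) + (real_of_int x2 - a * real_of_int y2) * Re w + Re l"
    and "Im (X - of_real a * Y + l) = (real_of_int x2 - a * real_of_int y2) * Im w + Im l"
  using assms by (simp_all add: algebra_simps)

theorem theorem4:
  fixes d n :: nat and alpha :: "nat \<Rightarrow> real" and lam :: "nat \<Rightarrow> complex"
    and c0 :: real and X Y :: complex
  assumes "d > 1" and "squarefree d"
    and "n \<ge> 1"
    and "inj_on alpha {1..n}" and "\<forall>j\<in>{1..n}. alpha j \<noteq> 0"
    and "c0 > 0"
    and "X \<in> ZM d" and "Y \<in> ZM d"
    and "norm (\<Prod>j=1..n. X - of_real (alpha j) * Y + lam j) \<le> c0"
  shows
    "(d mod 4 = 3 \<longrightarrow>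
       (\<forall>x1 x2 y1 y2 :: int.
          X = of_int x1 + of_int x2 * ((1 + \<i> * complex_of_real (sqrt (real d))) / 2) \<and>
          Y = of_int y1 + of_int y2 * ((1 + \<i> * complex_of_real (sqrt (real d))) / 2) \<longrightarrow>
          \<bar>\<Prod>j=1..n. real_of_int (2*x1 + x2) - alpha j * real_of_int (2*y1 + y2) + 2 * Re (lam j)\<bar>
             \<le> 2 ^ n * c0 \<and>
          \<bar>\<Prod>j=1..n. real_of_int x2 - alpha j * real_of_int y2 + 2 / sqrt (real d) * Im (lam j)\<bar>
             \<le> 2 ^ n * c0 / sqrt (real d) ^ n))
   \<and>
    ((d mod 4 = 1 \<or> d mod 4 = 2) \<longrightarrow>
       (\<forall>x1 x2 y1 y2 :: int.
          X = of_int x1 + of_int x2 * (\<i> * complex_of_real (sqrt (real d))) \<and>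
          Y = of_int y1 + of_int y2 * (\<i> * complex_of_real (sqrt (real d))) \<longrightarrow>
          \<bar>\<Prod>j=1..n. real_of_int x1 - alpha j * real_of_int y1 + Re (lam j)\<bar> \<le> c0 \<and>
          \<bar>\<Prod>j=1..n. real_of_int x2 - alpha j * real_of_int y2 + 1 / sqrt (real d) * Im (lam j)\<bar>
             \<le> c0 / sqrt (real d) ^ n))"
proof (intro conjI impI allI; elim conjE)
  let ?s = "sqrt (real d)"
  define z where "z j = X - of_real (alpha j) * Y + lam j" for j
  have bound: "norm (\<Prod>j=1..n. z j) \<le> c0"
    using assms(9) by (simp add: z_def)
  have "?s > 0"
    using assms(1) by simp
  fix x1 x2 y1 y2 :: int
  {
    assume "X = of_int x1 + of_int x2 * ((1 + \<i> * complex_of_real ?s) / 2)"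
      and "Y = of_int y1 + of_int y2 * ((1 + \<i> * complex_of_real ?s) / 2)"
    note coords = Re_Im_linear_form_in_basis[OF this]
    have Re_z: "real_of_int (2*x1 + x2) - alpha j * real_of_int (2*y1 + y2) + 2 * Re (lam j)
        = 2 * Re (z j)"
      and Im_z: "real_of_int x2 - alpha j * real_of_int y2 + 2 / ?s * Im (lam j) = 2 / ?s * Im (z j)"
      for j
      unfolding z_def coords using \<open>?s > 0\<close> by (simp_all add: field_simps)
    show "\<bar>\<Prod>j=1..n. real_of_int (2*x1 + x2) - alpha j * real_of_int (2*y1 + y2) + 2 * Re (lam j)\<bar>
        \<le> 2 ^ n * c0"
      using abs_prod_scaled_le_norm_prod[OF abs_Re_le_cmod bound, of 2]
      by (simp only: Re_z) simp
    show "\<bar>\<Prod>j=1..n. real_of_int x2 - alpha j * real_of_int y2 + 2 / ?s * Im (lam j)\<bar>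
        \<le> 2 ^ n * c0 / ?s ^ n"
      using abs_prod_scaled_le_norm_prod[OF abs_Im_le_cmod bound, of "2 / ?s"]
      by (simp only: Im_z) (simp add: power_divide)
  }
  {
    assume "X = of_int x1 + of_int x2 * (\<i> * complex_of_real ?s)"
      and "Y = of_int y1 + of_int y2 * (\<i> * complex_of_real ?s)"
    note coords = Re_Im_linear_form_in_basis[OF this]
    have Re_z: "real_of_int x1 - alpha j * real_of_int y1 + Re (lam j) = 1 * Re (z j)"
      and Im_z: "real_of_int x2 - alpha j * real_of_int y2 + 1 / ?s * Im (lam j) = 1 / ?s * Im (z j)"
      for j
      unfolding z_def coords using \<open>?s > 0\<close> by (simp_all add: field_simps)
    show "\<bar>\<Prod>j=1..n. real_of_int x1 - alpha j * real_of_int y1 + Re (lam j)\<bar> \<le> c0"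
      using abs_prod_scaled_le_norm_prod[OF abs_Re_le_cmod bound, of 1]
      by (simp only: Re_z) simp
    show "\<bar>\<Prod>j=1..n. real_of_int x2 - alpha j * real_of_int y2 + 1 / ?s * Im (lam j)\<bar>
        \<le> c0 / ?s ^ n"
      using abs_prod_scaled_le_norm_prod[OF abs_Im_le_cmod bound, of "1 / ?s"]
      by (simp only: Im_z) (simp add: power_divide)
  }
qed

end
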